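(* Let $k,r,p>0$ be integers and let $F:\mathbb{N}^k\to\mathbb{N}^r$ satisfy $|F(x)|\le \min(x)$ for all $x\in\mathbb{N}^k$. Then there exists a set $E\subseteq\mathbb{N}$ with $|E|=p$ such that $|F[E^k]|\le k^k\,p$, where $F[E^k]=\{F(x):x\in E^k\}$.
   Context: $\mathbb{N}=\{0,1,2,\dots\}$. For $x=(x_1,\dots,x_k)\in\mathbb{N}^k$, $\min(x)$ is the minimum coordinate of $x$ and $|x|$ is the maximum coordinate of $x$ (sup norm). For a finite set $S$, $|S|$ denotes its cardinality. *)

theory Defs
  imports Main
begin

text \<open>Vectors in N^k are represented as lists of length k.
  min(x) is the minimum coordinate, |y| the maximum coordinate (sup norm).\<close>

definition cube :: "nat set \<Rightarrow> nat \<Rightarrow> nat list set" where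
  "cube E k = {x. length x = k \<and> set x \<subseteq> E}"

definition supnorm :: "nat list \<Rightarrow> nat" where
  "supnorm y = Max (set y)"

definition minc :: "nat list \<Rightarrow> nat" where
  "minc x = Min (set x)"

end

theory Submission
  imports Defs "HOL-Library.Ramsey" "HOL-Library.FuncSet"
begin

text \<open>
  Build E one element at a time inside an infinite reservoir S, always taking the least
  element a of S. Colour each (k-1)-subset T of the rest of S by the values of F on the
  k-tuples over {a} \<union> T that contain a, indexed by their order pattern (the ranks of their
  entries). As |F x| \<le> min x = a, there are finitely many colours, so Ramsey's theorem yields
  an infinite subreservoir on which, for tuples x through a, F x depends only on the order
  pattern of x. There are at most k^k patterns, so adding a creates at most k^k new values,
  and the remaining elements are chosen inside the subreservoir.
\<close>

lemma finite_cube: "finite E \<Longrightarrow> finite (cube E k)"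
  unfolding cube_def using finite_lists_length_eq[of E k] by (simp add: conj_commute)

lemma card_cube: "finite E \<Longrightarrow> card (cube E k) = card E ^ k"
  unfolding cube_def using card_lists_length_eq[of E k] by (simp add: conj_commute)

lemma Ramsey_finite_colours:
  fixes f :: "'a set \<Rightarrow> 'b"
  assumes "infinite Z" and "finite C"
    and colours: "\<And>X. X \<subseteq> Z \<Longrightarrow> finite X \<Longrightarrow> card X = r \<Longrightarrow> f X \<in> C"
  obtains Y c where "Y \<subseteq> Z" "infinite Y" "\<And>X. X \<subseteq> Y \<Longrightarrow> finite X \<Longrightarrow> card X = r \<Longrightarrow> f X = c"
proof -
  obtain h where h: "bij_betw h C {0..<card C}"
    using ex_bij_betw_finite_nat[OF \<open>finite C\<close>] by blast
  have "h (f X) < card C" if "X \<subseteq> Z" "finite X" "card X = r" for X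
    using bij_betwE[OF h] colours[OF that] by auto
  then have "\<forall>X. X \<subseteq> Z \<and> finite X \<and> card X = r \<longrightarrow> h (f X) < card C"
    by blast
  from Ramsey[OF \<open>infinite Z\<close> this] obtain Y t where Y: "Y \<subseteq> Z" "infinite Y"
    and t: "\<forall>X. X \<subseteq> Y \<and> finite X \<and> card X = r \<longrightarrow> h (f X) = t"
    by auto
  have monochromatic: "f X = the_inv_into C h t" if "X \<subseteq> Y" "finite X" "card X = r" for X
  proof -
    have "f X \<in> C"
      using that Y(1) colours by blast
    then show ?thesis
      using t that the_inv_into_f_f[OF bij_betw_imp_inj_on[OF h]] by metis
  qed
  show thesis
    using that[OF Y monochromatic] .
qed

lemma sorted_list_of_set_Un_less:
  fixes A B :: "'a::linorder set"
  assumes "finite A" "finite B" "\<forall>u\<in>A. \<forall>v\<in>B. u < v"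
  shows "sorted_list_of_set (A \<union> B) = sorted_list_of_set A @ sorted_list_of_set B"
proof -
  have "sorted_wrt (<) (sorted_list_of_set A @ sorted_list_of_set B)"
    using assms by (simp add: sorted_wrt_append strict_sorted_list_of_set)
  moreover have "set (sorted_list_of_set A @ sorted_list_of_set B) = A \<union> B"
    using assms by simp
  ultimately show ?thesis
    using assms(1,2) by (intro strict_sorted_equal) (simp_all add: strict_sorted_list_of_set)
qed

lemma obtain_sorted_extension:
  fixes V Y :: "nat set"
  assumes "finite V" "infinite Y" "card V \<le> n"
  obtains W where "W \<subseteq> Y" "finite W" "card (V \<union> W) = n"
    "sorted_list_of_set (V \<union> W) = sorted_list_of_set V @ sorted_list_of_set W"
proof -
  have "infinite (Y - {..Max V})"
    using \<open>infinite Y\<close> by (simp add: Diff_infinite_finite)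
  then obtain W where W: "W \<subseteq> Y - {..Max V}" "finite W" "card W = n - card V"
    using infinite_arbitrarily_large by blast
  have less: "\<forall>v\<in>V. \<forall>w\<in>W. v < w"
    using W(1) Max_ge[OF \<open>finite V\<close>] by fastforce
  then have "card (V \<union> W) = card V + card W"
    using assms(1) W(2) by (intro card_Un_disjoint) auto
  then show thesis
    using W assms less sorted_list_of_set_Un_less[OF assms(1) W(2) less] by (intro that[of W]) auto
qed

definition order_pattern :: "'a::linorder list \<Rightarrow> nat list" where
  "order_pattern x = map (\<lambda>v. LEAST i. sorted_list_of_set (set x) ! i = v) x"

text \<open>
  Index 0, the position of the minimum, occurs in the pattern of every nonempty tuple;
  requiring it makes every instance of a pattern over insert a T pass through a.
\<close>
definition order_patterns :: "nat \<Rightarrow> nat list set" where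
  "order_patterns k = {\<sigma> \<in> cube {..<k} k. 0 \<in> set \<sigma>}"

lemma Least_nth_eq:
  assumes "v \<in> set L"
  shows "(LEAST i. L ! i = v) < length L" "L ! (LEAST i. L ! i = v) = v"
proof -
  obtain j where "j < length L" "L ! j = v"
    using assms by (metis in_set_conv_nth)
  then show "(LEAST i. L ! i = v) < length L" "L ! (LEAST i. L ! i = v) = v"
    using Least_le[of "\<lambda>i. L ! i = v" j] LeastI[of "\<lambda>i. L ! i = v" j] by auto
qed

lemma map_nth_order_pattern:
  "map ((!) (sorted_list_of_set (set x) @ ys)) (order_pattern x) = x"
  unfolding order_pattern_def map_map
proof (rule map_idI)
  fix v
  assume "v \<in> set x"
  then have v: "v \<in> set (sorted_list_of_set (set x))"
    by simp
  show "((!) (sorted_list_of_set (set x) @ ys) \<circ> (\<lambda>v. LEAST i. sorted_list_of_set (set x) ! i = v)) v = v"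
    using Least_nth_eq[OF v] by (simp add: nth_append)
qed

lemma order_pattern_in_order_patterns:
  fixes x :: "'a::linorder list"
  assumes "length x = k" "x \<noteq> []"
  shows "order_pattern x \<in> order_patterns k"
proof -
  let ?L = "sorted_list_of_set (set x)"
  have "length ?L \<le> length x"
    by (simp add: card_length)
  then have "set (order_pattern x) \<subseteq> {..<length x}"
    unfolding order_pattern_def using Least_nth_eq(1)[of _ ?L] by fastforce
  moreover have "?L ! 0 = Min (set x)"
    using assms(2) sorted_list_of_set_nonempty[of "set x"] by simp
  then have "(LEAST i. ?L ! i = Min (set x)) = 0"
    by (simp add: Least_eq_0)
  then have "0 \<in> set (order_pattern x)"
    unfolding order_pattern_def using assms(2) by (force intro: Min_in)
  ultimately show ?thesis
    unfolding order_patterns_def cube_def order_pattern_def using assms(1) by simp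
qed

lemma finite_order_patterns: "finite (order_patterns k)"
  unfolding order_patterns_def using finite_cube[of "{..<k}" k] by simp

lemma card_order_patterns_le: "card (order_patterns k) \<le> k ^ k"
proof -
  have "card (order_patterns k) \<le> card (cube {..<k} k)"
    unfolding order_patterns_def by (intro card_mono finite_cube) auto
  then show ?thesis by (simp add: card_cube)
qed

lemma cube_mono: "A \<subseteq> B \<Longrightarrow> cube A k \<subseteq> cube B k"
  unfolding cube_def by auto

lemma pattern_instance_through_least:
  fixes a :: nat
  assumes "finite T" "card T = k - 1" "k > 0" "\<forall>t\<in>T. a < t" "\<sigma> \<in> order_patterns k"
  defines "y \<equiv> map ((!) (sorted_list_of_set (insert a T))) \<sigma>"
  shows "y \<in> cube (insert a T) k" "a \<in> set y"
proof -
  let ?L = "sorted_list_of_set (insert a T)"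
  have "a \<notin> T"
    using assms(4) by blast
  then have "length ?L = k"
    using assms(1-3) by simp
  then have "?L ! i \<in> set ?L" if "i \<in> set \<sigma>" for i
    using assms(5) that unfolding order_patterns_def cube_def by (intro nth_mem) auto
  then have "set y \<subseteq> insert a T"
    using assms(1) unfolding y_def by (auto simp del: sorted_list_of_set_insert_remove)
  then show "y \<in> cube (insert a T) k"
    using assms(5) unfolding order_patterns_def cube_def y_def by simp
  have "Min (insert a T) = a"
    using assms(1,4) by (intro Min_eqI) (auto intro: less_imp_le)
  then have "?L ! 0 = a"
    using assms(1) sorted_list_of_set_nonempty[of "insert a T"] by simp
  then show "a \<in> set y"
    using assms(5) unfolding order_patterns_def y_def by force
qed

lemma obtain_order_pattern_frame:
  fixes Y :: "nat set"
  assumes "infinite Y" "a \<notin> Y" "x \<in> cube (insert a Y) k" "a \<in> set x"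
  obtains T where "T \<subseteq> Y" "finite T" "card T = k - 1"
    "map ((!) (sorted_list_of_set (insert a T))) (order_pattern x) = x"
proof -
  have "card (set x) \<le> k"
    using assms(3) card_length unfolding cube_def by fastforce
  then obtain W where W: "W \<subseteq> Y" "finite W" "card (set x \<union> W) = k"
    and sorted: "sorted_list_of_set (set x \<union> W) = sorted_list_of_set (set x) @ sorted_list_of_set W"
    using obtain_sorted_extension[OF finite_set \<open>infinite Y\<close>] by blast
  txt \<open>As W lies above x, set x is an initial segment of insert a T, so x is read back from its pattern.\<close>
  define T where "T = (set x - {a}) \<union> W"
  have "a \<notin> T"
    using W(1) assms(2) unfolding T_def by blast
  have insert_a_T: "insert a T = set x \<union> W"
    using assms(4) unfolding T_def by blast
  have "T \<subseteq> Y"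
    using assms(3) W(1) unfolding T_def cube_def by blast
  moreover have "finite T"
    using W(2) unfolding T_def by blast
  moreover have "card T = k - 1"
    using insert_a_T \<open>a \<notin> T\<close> \<open>finite T\<close> W(3) by (metis card_insert_disjoint diff_Suc_1)
  moreover have "map ((!) (sorted_list_of_set (insert a T))) (order_pattern x) = x"
    unfolding insert_a_T sorted by (rule map_nth_order_pattern)
  ultimately show thesis
    by (rule that)
qed

lemma infinite_subset_pattern_determined:
  fixes F :: "nat list \<Rightarrow> 'b"
  assumes "k > 0" and "infinite S" and above: "\<And>s. s \<in> S \<Longrightarrow> a < s"
    and finite_values: "finite (F ` {x \<in> cube (insert a S) k. a \<in> set x})"
  obtains S' c where "S' \<subseteq> S" "infinite S'"
    "\<And>x. x \<in> cube (insert a S') k \<Longrightarrow> a \<in> set x \<Longrightarrow> F x = c (order_pattern x)"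
proof -
  define spread where "spread T \<sigma> = map ((!) (sorted_list_of_set (insert a T))) \<sigma>" for T \<sigma>
  define colour where "colour T = (\<lambda>\<sigma> \<in> order_patterns k. F (spread T \<sigma>))" for T
  have colour_in: "colour T \<in> order_patterns k \<rightarrow>\<^sub>E F ` {x \<in> cube (insert a S) k. a \<in> set x}"
    if T: "T \<subseteq> S" "finite T" "card T = k - 1" for T
  proof -
    have above_T: "\<forall>t\<in>T. a < t" and "insert a T \<subseteq> insert a S"
      using T(1) above by auto
    have "F (spread T \<sigma>) \<in> F ` {x \<in> cube (insert a S) k. a \<in> set x}"
      if "\<sigma> \<in> order_patterns k" for \<sigma>
      using pattern_instance_through_least[OF T(2,3) \<open>k > 0\<close> above_T \<open>\<sigma> \<in> order_patterns k\<close>]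
        cube_mono[OF \<open>insert a T \<subseteq> insert a S\<close>]
      unfolding spread_def by blast
    then show ?thesis
      unfolding colour_def by auto
  qed
  show thesis
  proof (rule Ramsey_finite_colours[OF \<open>infinite S\<close> finite_PiE[OF finite_order_patterns finite_values]
        colour_in])
    fix Y c
    assume Y: "Y \<subseteq> S" "infinite Y"
      and monochromatic: "\<And>T. T \<subseteq> Y \<Longrightarrow> finite T \<Longrightarrow> card T = k - 1 \<Longrightarrow> colour T = c"
    show thesis
    proof (rule that[OF Y])
      fix x
      assume x: "x \<in> cube (insert a Y) k" "a \<in> set x"
      have "a \<notin> Y"
        using Y(1) above by blast
      then obtain T where "T \<subseteq> Y" "finite T" "card T = k - 1"
        and spread: "spread T (order_pattern x) = x"
        using obtain_order_pattern_frame[OF \<open>infinite Y\<close> _ x] unfolding spread_def by blast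
      then have "colour T = c"
        by (intro monochromatic)
      have "length x = k" "x \<noteq> []"
        using x unfolding cube_def by auto
      then have "order_pattern x \<in> order_patterns k"
        by (rule order_pattern_in_order_patterns)
      then have "F x = colour T (order_pattern x)"
        by (simp add: colour_def spread)
      with \<open>colour T = c\<close> show "F x = c (order_pattern x)"
        by simp
    qed
  qed
qed

lemma card_image_cube_insert_le:
  assumes "finite E" "E \<subseteq> S"
    and pattern: "\<And>x. x \<in> cube (insert a S) k \<Longrightarrow> a \<in> set x \<Longrightarrow> F x = c (order_pattern x)"
  shows "card (F ` cube (insert a E) k) \<le> card (F ` cube E k) + k ^ k"
proof -
  have "F ` cube (insert a E) k \<subseteq> F ` cube E k \<union> c ` order_patterns k"
  proof
    fix z
    assume "z \<in> F ` cube (insert a E) k"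
    then obtain x where x: "x \<in> cube (insert a E) k" "z = F x"
      by blast
    show "z \<in> F ` cube E k \<union> c ` order_patterns k"
    proof (cases "a \<in> set x")
      case True
      then have "x \<in> cube (insert a S) k" "length x = k" "x \<noteq> []"
        using x(1) assms(2) unfolding cube_def by auto
      then show ?thesis
        using pattern True x(2) order_pattern_in_order_patterns by blast
    next
      case False
      then have "x \<in> cube E k"
        using x(1) unfolding cube_def by auto
      then show ?thesis
        using x(2) by blast
    qed
  qed
  then have "card (F ` cube (insert a E) k) \<le> card (F ` cube E k \<union> c ` order_patterns k)"
    using assms(1) by (intro card_mono) (simp_all add: finite_cube finite_order_patterns)
  also have "\<dots> \<le> card (F ` cube E k) + card (c ` order_patterns k)"
    by (rule card_Un_le)
  also have "\<dots> \<le> card (F ` cube E k) + k ^ k"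
    using card_image_le[OF finite_order_patterns[of k], of c] card_order_patterns_le[of k]
    by linarith
  finally show ?thesis .
qed

lemma exists_subset_small_image_cube:
  fixes F :: "nat list \<Rightarrow> 'b"
  assumes "k > 0"
    and finite_values: "\<And>a. finite (F ` {x \<in> cube {a..} k. a \<in> set x})"
    and "infinite S"
  shows "\<exists>E \<subseteq> S. finite E \<and> card E = p \<and> card (F ` cube E k) \<le> k ^ k * p"
  using \<open>infinite S\<close>
proof (induction p arbitrary: S)
  case 0
  have "cube {} k = {}"
    using \<open>k > 0\<close> unfolding cube_def by auto
  then show ?case
    by auto
next
  case (Suc p)
  obtain a where "a \<in> S"
    using Suc.prems infinite_imp_nonempty by blast
  define S0 where "S0 = S - {..a}"
  have "infinite S0"
    using Suc.prems unfolding S0_def by (simp add: Diff_infinite_finite)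
  have above: "a < s" if "s \<in> S0" for s
    using that unfolding S0_def by auto
  have "{x \<in> cube (insert a S0) k. a \<in> set x} \<subseteq> {x \<in> cube {a..} k. a \<in> set x}"
    using above unfolding cube_def by fastforce
  then have "finite (F ` {x \<in> cube (insert a S0) k. a \<in> set x})"
    using finite_values by (meson finite_subset image_mono)
  then obtain S' c where S': "S' \<subseteq> S0" "infinite S'"
    and pattern: "\<And>x. x \<in> cube (insert a S') k \<Longrightarrow> a \<in> set x \<Longrightarrow> F x = c (order_pattern x)"
    using infinite_subset_pattern_determined[OF \<open>k > 0\<close> \<open>infinite S0\<close> above] by blast
  obtain E where E: "E \<subseteq> S'" "finite E" "card E = p"
    and card_E: "card (F ` cube E k) \<le> k ^ k * p"
    using Suc.IH[OF S'(2)] by blast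
  have "card (F ` cube (insert a E) k) \<le> k ^ k * Suc p"
    using card_image_cube_insert_le[where F = F and c = c and a = a and k = k, OF E(2,1) pattern] card_E
    by simp
  moreover have "a \<notin> E" "insert a E \<subseteq> S"
    using E(1) S'(1) above \<open>a \<in> S\<close> unfolding S0_def by auto
  ultimately show ?case
    using E(2,3) by (intro exI[of _ "insert a E"]) auto
qed

theorem theorem0p1:
  fixes k r p :: nat and F :: "nat list \<Rightarrow> nat list"
  assumes "k > 0" and "r > 0" and "p > 0"
    and "\<And>x. length x = k \<Longrightarrow> length (F x) = r"
    and "\<And>x. length x = k \<Longrightarrow> supnorm (F x) \<le> minc x"
  shows "\<exists>E :: nat set. finite E \<and> card E = p \<and> card (F ` cube E k) \<le> k ^ k * p"
proof -
  txt \<open>The bounds only serve to make F finite-valued on the tuples with minimum a.\<close>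
  have "F ` {x \<in> cube {a..} k. a \<in> set x} \<subseteq> cube {..a} r" for a
  proof clarify
    fix x
    assume x: "x \<in> cube {a..} k" "a \<in> set x"
    then have "minc x = a"
      unfolding minc_def cube_def by (intro Min_eqI) auto
    then have "supnorm (F x) \<le> a"
      using assms(5) x(1) unfolding cube_def by fastforce
    then show "F x \<in> cube {..a} r"
      using assms(4) x(1) unfolding cube_def supnorm_def by (auto dest: Max_ge[OF finite_set] order_trans)
  qed
  then have "finite (F ` {x \<in> cube {a..} k. a \<in> set x})" for a
    by (rule finite_subset) (simp add: finite_cube)
  then show ?thesis
    using exists_subset_small_image_cube[OF \<open>k > 0\<close>, of F UNIV p] by auto
qed

end
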